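(* Let $\eta_1,\eta_2$ be real functions and $f_1,f_2$ real functions with $\|f_1\|_\infty\le N$ and $\|f_2\|_\infty\le N$ for a constant $N$, and put $V_i=e^{f_i}$. Then $$K(\mathcal{P}_{\eta_1,V_1},\mathcal{P}_{\eta_2,V_2})\le(1+e^{2N})\big(\|\eta_1-\eta_2\|_n^2+\|f_1-f_2\|_n^2\big),$$ $$\mathrm{Var}(\mathcal{P}_{\eta_1,V_1},\mathcal{P}_{\eta_2,V_2})\le e^{4N}\big(\|\eta_1-\eta_2\|_n^2+\|f_1-f_2\|_n^2\big).$$
   Context: Let $Q$ be a probability measure on the covariate space $[0,1]^d$ and $\|\cdot\|_n$ the norm of $L_2(Q)$; $\|\cdot\|_\infty$ is the supremum norm. For functions $\eta$ and $V>0$ let $\mathcal{P}_{\eta,V}(y\mid x)=(2\pi V(x))^{-1/2}\exp(-(y-\eta(x))^2/(2V(x)))$. For fixed $x$ define $K_x(\mathcal{P}_1,\mathcal{P}_2)=\int\mathcal{P}_1\log(\mathcal{P}_1/\mathcal{P}_2)\,dy$ and $\mathrm{Var}_x(\mathcal{P}_1,\mathcal{P}_2)=\int\mathcal{P}_1\big(\log(\mathcal{P}_1/\mathcal{P}_2)-K_x(\mathcal{P}_1,\mathcal{P}_2)\big)^2\,dy$, and the averaged versions $K(\mathcal{P}_1,\mathcal{P}_2)=\int K_x(\mathcal{P}_1,\mathcal{P}_2)\,dQ(x)$ and $\mathrm{Var}(\mathcal{P}_1,\mathcal{P}_2)=\int\mathrm{Var}_x(\mathcal{P}_1,\mathcal{P}_2)\,dQ(x)$.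 *)

theory Defs
  imports "HOL-Probability.Probability"
begin

definition gauss_dens :: "real \<Rightarrow> real \<Rightarrow> real \<Rightarrow> real" where
  "gauss_dens m v y = exp (- ((y - m)^2) / (2 * v)) / sqrt (2 * pi * v)"

definition Pcond :: "('a \<Rightarrow> real) \<Rightarrow> ('a \<Rightarrow> real) \<Rightarrow> 'a \<Rightarrow> real \<Rightarrow> real" where
  "Pcond eta V x y = gauss_dens (eta x) (V x) y"

definition KL_x :: "(real \<Rightarrow> real) \<Rightarrow> (real \<Rightarrow> real) \<Rightarrow> real" where
  "KL_x p1 p2 = (\<integral>y. p1 y * ln (p1 y / p2 y) \<partial>lborel)"

definition Var_x :: "(real \<Rightarrow> real) \<Rightarrow> (real \<Rightarrow> real) \<Rightarrow> real" where
  "Var_x p1 p2 = (\<integral>y. p1 y * (ln (p1 y / p2 y) - KL_x p1 p2)^2 \<partial>lborel)"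

text \<open>Averaged versions (integrands are nonnegative; integrated as
  nonnegative Lebesgue integrals so that the value may be infinite).\<close>
definition KL_avg :: "'a measure \<Rightarrow> ('a \<Rightarrow> real \<Rightarrow> real) \<Rightarrow> ('a \<Rightarrow> real \<Rightarrow> real) \<Rightarrow> ennreal" where
  "KL_avg Q P1 P2 = (\<integral>\<^sup>+ x. ennreal (KL_x (P1 x) (P2 x)) \<partial>Q)"

definition Var_avg :: "'a measure \<Rightarrow> ('a \<Rightarrow> real \<Rightarrow> real) \<Rightarrow> ('a \<Rightarrow> real \<Rightarrow> real) \<Rightarrow> ennreal" where
  "Var_avg Q P1 P2 = (\<integral>\<^sup>+ x. ennreal (Var_x (P1 x) (P2 x)) \<partial>Q)"

definition L2Q_sq :: "'a measure \<Rightarrow> ('a \<Rightarrow> real) \<Rightarrow> ennreal" where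
  "L2Q_sq Q g = (\<integral>\<^sup>+ x. ennreal ((g x)^2) \<partial>Q)"

definition unit_cube :: "(real^'d) set" where
  "unit_cube = {x. \<forall>i. 0 \<le> x $ i \<and> x $ i \<le> 1}"

end

theory Submission
  imports Defs
begin

text \<open>For Gaussian conditionals both quantities have closed forms. Writing \<open>d = f\<^sub>1 - f\<^sub>2\<close>,
  so that \<open>V\<^sub>1/V\<^sub>2 = e\<^sup>d\<close>, the log-ratio is a quadratic polynomial in \<open>y - \<eta>\<^sub>1\<close>, and the Gaussian
  moments give
  \<open>K\<^sub>x = (\<eta>\<^sub>1 - \<eta>\<^sub>2)\<^sup>2/(2V\<^sub>2) + (e\<^sup>d - 1 - d)/2\<close> and
  \<open>Var\<^sub>x = (\<eta>\<^sub>1 - \<eta>\<^sub>2)\<^sup>2 V\<^sub>1/V\<^sub>2\<^sup>2 + (e\<^sup>d - 1)\<^sup>2/2\<close>.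
  Since \<open>|d| \<le> 2N\<close>, the elementary bounds \<open>e\<^sup>d - 1 - d \<le> d\<^sup>2 e\<^bsup>|d|\<^esup>\<close> and
  \<open>|e\<^sup>d - 1| \<le> |d| e\<^bsup>|d|\<^esup>\<close> bound both pointwise by a multiple of
  \<open>(\<eta>\<^sub>1 - \<eta>\<^sub>2)\<^sup>2 + (f\<^sub>1 - f\<^sub>2)\<^sup>2\<close>, and integrating over \<open>Q\<close> gives the claim.\<close>

lemma integral_normal_density_quartic:
  fixes \<sigma> :: real
  assumes \<sigma>: "0 < \<sigma>"
  shows "(\<integral>y. normal_density \<mu> \<sigma> y *
            (a0 + a1 * (y - \<mu>) + a2 * (y - \<mu>)^2 + a3 * (y - \<mu>)^3 + a4 * (y - \<mu>)^4) \<partial>lborel)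
         = a0 + a2 * \<sigma>^2 + 3 * a4 * \<sigma>^4"
proof -
  let ?n = "normal_density \<mu> \<sigma>"
  have m0: "has_bochner_integral lborel (\<lambda>y. ?n y * a0) (1 * a0)"
    using normal_moment_even[OF \<sigma>, of \<mu> 0] by (intro has_bochner_integral_mult_left) simp
  have m1: "has_bochner_integral lborel (\<lambda>y. ?n y * (y - \<mu>) * a1) (0 * a1)"
    using normal_moment_odd[OF \<sigma>, of \<mu> 0] by (intro has_bochner_integral_mult_left) simp
  have m2: "has_bochner_integral lborel (\<lambda>y. ?n y * (y - \<mu>)^2 * a2) (\<sigma>^2 * a2)"
    using normal_moment_even[OF \<sigma>, of \<mu> 1] by (intro has_bochner_integral_mult_left) simp
  have m3: "has_bochner_integral lborel (\<lambda>y. ?n y * (y - \<mu>)^3 * a3) (0 * a3)"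
    using normal_moment_odd[OF \<sigma>, of \<mu> 1]
    by (intro has_bochner_integral_mult_left) (simp add: numeral_eq_Suc)
  have "fact (2 * 2) / ((2 / \<sigma>\<^sup>2)^2 * fact 2) = 3 * \<sigma>^4"
    using \<sigma> by (simp add: fact_numeral field_simps power2_eq_square eval_nat_numeral)
  then have m4: "has_bochner_integral lborel (\<lambda>y. ?n y * (y - \<mu>)^4 * a4) (3 * \<sigma>^4 * a4)"
    using normal_moment_even[OF \<sigma>, of \<mu> 2] by (intro has_bochner_integral_mult_left) simp
  have "has_bochner_integral lborel
          (\<lambda>y. ?n y * a0 + ?n y * (y - \<mu>) * a1 + ?n y * (y - \<mu>)^2 * a2
               + ?n y * (y - \<mu>)^3 * a3 + ?n y * (y - \<mu>)^4 * a4)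
          (1 * a0 + 0 * a1 + \<sigma>^2 * a2 + 0 * a3 + 3 * \<sigma>^4 * a4)"
    by (intro has_bochner_integral_add m0 m1 m2 m3 m4)
  then show ?thesis
    by (intro has_bochner_integral_integral_eq) (simp add: algebra_simps)
qed

lemma gauss_dens_eq_normal_density:
  "v > 0 \<Longrightarrow> gauss_dens m v y = normal_density m (sqrt v) y"
  by (simp add: gauss_dens_def normal_density_def)

lemma gauss_dens_pos: "v > 0 \<Longrightarrow> gauss_dens m v y > 0"
  by (simp add: gauss_dens_def)

lemma ln_gauss_dens:
  "v > 0 \<Longrightarrow> ln (gauss_dens m v y) = - ((y - m)^2 / (2 * v)) - (ln (2 * pi) + ln v) / 2"
  by (simp add: gauss_dens_def ln_div ln_sqrt ln_mult)

lemma ln_gauss_dens_ratio: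
  assumes v1: "v1 > 0" and v2: "v2 > 0"
  shows "ln (gauss_dens m1 v1 y / gauss_dens m2 v2 y)
         = ((m1 - m2)^2 / (2 * v2) + (ln v2 - ln v1) / 2)
           + ((m1 - m2) / v2) * (y - m1) + (1 / (2 * v2) - 1 / (2 * v1)) * (y - m1)^2"
proof -
  have "ln (gauss_dens m1 v1 y / gauss_dens m2 v2 y) = ln (gauss_dens m1 v1 y) - ln (gauss_dens m2 v2 y)"
    using gauss_dens_pos[OF v1] gauss_dens_pos[OF v2] by (rule ln_divide_pos)
  also have "\<dots> = (- ((y - m1)^2 / (2 * v1)) + (y - m2)^2 / (2 * v2)) + (ln v2 - ln v1) / 2"
    using v1 v2 by (simp add: ln_gauss_dens algebra_simps diff_divide_distrib add_divide_distrib)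
  also have "- ((y - m1)^2 / (2 * v1)) + (y - m2)^2 / (2 * v2)
             = (m1 - m2)^2 / (2 * v2) + ((m1 - m2) / v2) * (y - m1)
               + (1 / (2 * v2) - 1 / (2 * v1)) * (y - m1)^2"
    using v1 v2 by (simp add: field_simps power2_eq_square)
  finally show ?thesis by simp
qed

lemma KL_x_gauss_dens:
  assumes v1: "v1 > 0" and v2: "v2 > 0"
  shows "KL_x (gauss_dens m1 v1) (gauss_dens m2 v2)
         = (m1 - m2)^2 / (2 * v2) + (ln v2 - ln v1) / 2 + (v1 / v2 - 1) / 2"
proof -
  have "KL_x (gauss_dens m1 v1) (gauss_dens m2 v2)
        = (\<integral>y. normal_density m1 (sqrt v1) y *
             (((m1 - m2)^2 / (2 * v2) + (ln v2 - ln v1) / 2) + ((m1 - m2) / v2) * (y - m1)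
              + (1 / (2 * v2) - 1 / (2 * v1)) * (y - m1)^2 + 0 * (y - m1)^3 + 0 * (y - m1)^4) \<partial>lborel)"
    unfolding KL_x_def
    by (intro Bochner_Integration.integral_cong refl, simp only: ln_gauss_dens_ratio[OF v1 v2])
       (simp add: gauss_dens_eq_normal_density[OF v1])
  also have "\<dots> = (m1 - m2)^2 / (2 * v2) + (ln v2 - ln v1) / 2
                  + (1 / (2 * v2) - 1 / (2 * v1)) * (sqrt v1)^2"
    using v1 by (subst integral_normal_density_quartic) auto
  also have "\<dots> = (m1 - m2)^2 / (2 * v2) + (ln v2 - ln v1) / 2 + (v1 / v2 - 1) / 2"
    using v1 v2 by (simp add: field_simps)
  finally show ?thesis .
qed

lemma Var_x_gauss_dens:
  assumes v1: "v1 > 0" and v2: "v2 > 0"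
  shows "Var_x (gauss_dens m1 v1) (gauss_dens m2 v2) = (m1 - m2)^2 * v1 / v2^2 + (v1 / v2 - 1)^2 / 2"
proof -
  define A where "A = (m1 - m2)^2 / (2 * v2) + (ln v2 - ln v1) / 2"
  define B where "B = (m1 - m2) / v2"
  define C where "C = 1 / (2 * v2) - 1 / (2 * v1)"
  have KL: "KL_x (gauss_dens m1 v1) (gauss_dens m2 v2) = A + C * v1"
    unfolding A_def C_def KL_x_gauss_dens[OF v1 v2] using v1 v2 by (simp add: field_simps)
  have centred_sq: "(ln (gauss_dens m1 v1 y / gauss_dens m2 v2 y) - (A + C * v1))^2
      = (C * v1)^2 + (-2 * B * C * v1) * (y - m1) + (B^2 - 2 * C^2 * v1) * (y - m1)^2
        + (2 * B * C) * (y - m1)^3 + C^2 * (y - m1)^4" for y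
    unfolding ln_gauss_dens_ratio[OF v1 v2] A_def[symmetric] B_def[symmetric] C_def[symmetric]
    by (simp add: power2_eq_square eval_nat_numeral algebra_simps)
  have "sqrt v1 ^ 4 = (sqrt v1 ^ 2)^2"
    by (simp flip: power_mult)
  then have sqrt4: "sqrt v1 ^ 4 = v1^2"
    using v1 by simp
  have "Var_x (gauss_dens m1 v1) (gauss_dens m2 v2)
        = (\<integral>y. normal_density m1 (sqrt v1) y *
             ((C * v1)^2 + (-2 * B * C * v1) * (y - m1) + (B^2 - 2 * C^2 * v1) * (y - m1)^2
              + (2 * B * C) * (y - m1)^3 + C^2 * (y - m1)^4) \<partial>lborel)"
    unfolding Var_x_def KL
    by (intro Bochner_Integration.integral_cong refl, simp only: centred_sq)
       (simp add: gauss_dens_eq_normal_density[OF v1])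
  also have "\<dots> = (C * v1)^2 + (B^2 - 2 * C^2 * v1) * v1 + 3 * C^2 * v1^2"
    using v1 sqrt4 by (subst integral_normal_density_quartic) auto
  also have "\<dots> = (m1 - m2)^2 * v1 / v2^2 + (v1 / v2 - 1)^2 / 2"
    using v1 v2 by (simp add: B_def C_def field_simps power2_eq_square)
  finally show ?thesis .
qed

lemma exp_minus_one_le_mult_exp:
  fixes d :: real
  shows "exp d - 1 \<le> d * exp d"
proof -
  have "(1 - d) * exp d \<le> exp (-d) * exp d"
    using exp_ge_add_one_self[of "-d"] by (intro mult_right_mono) auto
  then show ?thesis by (simp add: exp_minus field_simps)
qed

lemma abs_exp_minus_one_le:
  fixes d :: real
  shows "\<bar>exp d - 1\<bar> \<le> \<bar>d\<bar> * exp \<bar>d\<bar>"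
proof (cases "d \<ge> 0")
  case True
  then show ?thesis using exp_minus_one_le_mult_exp[of d] by simp
next
  case False
  moreover have "exp d \<le> 1" "1 + d \<le> exp d" using False by simp_all
  ultimately have "\<bar>exp d - 1\<bar> \<le> \<bar>d\<bar>" by linarith
  also have "\<dots> \<le> \<bar>d\<bar> * exp \<bar>d\<bar>" by (simp add: mult_le_cancel_left1)
  finally show ?thesis .
qed

lemma exp_minus_one_minus_le:
  fixes d :: real
  shows "exp d - 1 - d \<le> d\<^sup>2 * exp \<bar>d\<bar>"
proof -
  have "exp d - 1 - d \<le> d * (exp d - 1)"
    using exp_minus_one_le_mult_exp[of d] by (simp add: algebra_simps)
  also have "\<dots> \<le> \<bar>d\<bar> * \<bar>exp d - 1\<bar>"
    by (simp flip: abs_mult)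
  also have "\<dots> \<le> \<bar>d\<bar> * (\<bar>d\<bar> * exp \<bar>d\<bar>)"
    by (intro mult_left_mono abs_exp_minus_one_le) simp
  finally show ?thesis by (simp add: power2_eq_square)
qed
lemma KL_x_gauss_dens_exp_le:
  assumes f1: "\<bar>f1\<bar> \<le> N" and f2: "\<bar>f2\<bar> \<le> N"
  shows "KL_x (gauss_dens m1 (exp f1)) (gauss_dens m2 (exp f2))
         \<le> (1 + exp (2 * N)) * ((m1 - m2)^2 + (f1 - f2)^2)"
proof -
  define d where "d = f1 - f2"
  have "KL_x (gauss_dens m1 (exp f1)) (gauss_dens m2 (exp f2))
        = (m1 - m2)^2 * exp (-f2) / 2 + (exp d - 1 - d) / 2"
    by (simp add: KL_x_gauss_dens d_def exp_minus exp_diff field_simps)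
  also have "\<dots> \<le> (m1 - m2)^2 * (1 + exp (2 * N)) / 2 + d^2 * (1 + exp (2 * N)) / 2"
  proof (intro add_mono divide_right_mono)
    have "exp (-f2) \<le> exp N" "exp N \<le> exp (2 * N)"
      using f1 f2 by auto
    then have "exp (-f2) \<le> 1 + exp (2 * N)"
      by linarith
    then show "(m1 - m2)^2 * exp (-f2) \<le> (m1 - m2)^2 * (1 + exp (2 * N))"
      by (rule mult_left_mono) simp
    have "exp \<bar>d\<bar> \<le> 1 + exp (2 * N)"
      using f1 f2 by (simp add: d_def add_increasing)
    then have "d^2 * exp \<bar>d\<bar> \<le> d^2 * (1 + exp (2 * N))"
      by (rule mult_left_mono) simp
    then show "exp d - 1 - d \<le> d^2 * (1 + exp (2 * N))"
      using exp_minus_one_minus_le[of d] by linarith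
  qed simp_all
  also have "\<dots> = (1 + exp (2 * N)) * ((m1 - m2)^2 + d^2) / 2"
    by (simp add: algebra_simps add_divide_distrib)
  also have "\<dots> \<le> (1 + exp (2 * N)) * ((m1 - m2)^2 + d^2)"
    by (simp add: add_nonneg_nonneg)
  finally show ?thesis
    by (simp add: d_def)
qed

lemma Var_x_gauss_dens_exp_le:
  assumes f1: "\<bar>f1\<bar> \<le> N" and f2: "\<bar>f2\<bar> \<le> N"
  shows "Var_x (gauss_dens m1 (exp f1)) (gauss_dens m2 (exp f2))
         \<le> exp (4 * N) * ((m1 - m2)^2 + (f1 - f2)^2)"
proof -
  define d where "d = f1 - f2"
  have "Var_x (gauss_dens m1 (exp f1)) (gauss_dens m2 (exp f2))
        = (m1 - m2)^2 * exp (f1 - 2 * f2) + (exp d - 1)^2 / 2"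
    by (simp add: Var_x_gauss_dens d_def exp_diff exp_double)
  also have "\<dots> \<le> (m1 - m2)^2 * exp (4 * N) + d^2 * exp (4 * N)"
  proof (intro add_mono)
    show "(m1 - m2)^2 * exp (f1 - 2 * f2) \<le> (m1 - m2)^2 * exp (4 * N)"
      using f1 f2 by (intro mult_left_mono) auto
    have "exp \<bar>d\<bar> \<le> exp (2 * N)"
      using f1 f2 by (simp add: d_def)
    then have "\<bar>exp d - 1\<bar> \<le> \<bar>\<bar>d\<bar> * exp (2 * N)\<bar>"
      using abs_exp_minus_one_le[of d] mult_left_mono[of _ _ "\<bar>d\<bar>"] by fastforce
    then have "(exp d - 1)^2 \<le> (\<bar>d\<bar> * exp (2 * N))^2"
      by (simp only: abs_le_square_iff)
    also have "\<dots> = d^2 * exp (4 * N)"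
      by (simp add: power_mult_distrib flip: exp_double)
    finally have "(exp d - 1)^2 \<le> d^2 * exp (4 * N)" .
    moreover have "0 \<le> d^2 * exp (4 * N)"
      by simp
    ultimately show "(exp d - 1)^2 / 2 \<le> d^2 * exp (4 * N)"
      by linarith
  qed
  also have "\<dots> = exp (4 * N) * ((m1 - m2)^2 + (f1 - f2)^2)"
    by (simp add: d_def algebra_simps)
  finally show ?thesis .
qed

lemma nn_integral_le_cmult_sum_squares:
  fixes c :: real
  assumes c: "c \<ge> 0"
    and g1: "g1 \<in> borel_measurable M" and g2: "g2 \<in> borel_measurable M"
    and bound: "\<And>x. x \<in> space M \<Longrightarrow> F x \<le> c * ((g1 x)^2 + (g2 x)^2)"
  shows "(\<integral>\<^sup>+ x. ennreal (F x) \<partial>M)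
         \<le> ennreal c * ((\<integral>\<^sup>+ x. ennreal ((g1 x)^2) \<partial>M) + (\<integral>\<^sup>+ x. ennreal ((g2 x)^2) \<partial>M))"
proof -
  have "(\<integral>\<^sup>+ x. ennreal (F x) \<partial>M)
        \<le> (\<integral>\<^sup>+ x. ennreal c * (ennreal ((g1 x)^2) + ennreal ((g2 x)^2)) \<partial>M)"
  proof (rule nn_integral_mono)
    fix x assume "x \<in> space M"
    then have "ennreal (F x) \<le> ennreal (c * ((g1 x)^2 + (g2 x)^2))"
      by (intro ennreal_leI bound)
    also have "\<dots> = ennreal c * (ennreal ((g1 x)^2) + ennreal ((g2 x)^2))"
      using c by (simp add: ennreal_mult ennreal_plus)
    finally show "ennreal (F x) \<le> ennreal c * (ennreal ((g1 x)^2) + ennreal ((g2 x)^2))" .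
  qed
  also have "\<dots> = ennreal c * ((\<integral>\<^sup>+ x. ennreal ((g1 x)^2) \<partial>M) + (\<integral>\<^sup>+ x. ennreal ((g2 x)^2) \<partial>M))"
    using g1 g2 by (simp add: nn_integral_cmult nn_integral_add)
  finally show ?thesis .
qed

lemma Pcond_eq_gauss_dens: "Pcond eta V x = gauss_dens (eta x) (V x)"
  by (simp add: Pcond_def fun_eq_iff)

theorem lemma2:
  fixes Q :: "(real^'d) measure"
    and eta1 eta2 f1 f2 :: "real^'d \<Rightarrow> real"
    and N :: real
  assumes "prob_space Q"
    and "space Q = unit_cube"
    and "eta1 \<in> borel_measurable Q" and "eta2 \<in> borel_measurable Q"
    and "f1 \<in> borel_measurable Q" and "f2 \<in> borel_measurable Q"
    and "\<forall>x\<in>unit_cube. \<bar>f1 x\<bar> \<le> N"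
    and "\<forall>x\<in>unit_cube. \<bar>f2 x\<bar> \<le> N"
  shows "KL_avg Q (Pcond eta1 (\<lambda>x. exp (f1 x))) (Pcond eta2 (\<lambda>x. exp (f2 x)))
           \<le> ennreal (1 + exp (2 * N)) *
             (L2Q_sq Q (\<lambda>x. eta1 x - eta2 x) + L2Q_sq Q (\<lambda>x. f1 x - f2 x))
       \<and> Var_avg Q (Pcond eta1 (\<lambda>x. exp (f1 x))) (Pcond eta2 (\<lambda>x. exp (f2 x)))
           \<le> ennreal (exp (4 * N)) *
             (L2Q_sq Q (\<lambda>x. eta1 x - eta2 x) + L2Q_sq Q (\<lambda>x. f1 x - f2 x))"
proof
  have eta: "(\<lambda>x. eta1 x - eta2 x) \<in> borel_measurable Q" and f: "(\<lambda>x. f1 x - f2 x) \<in> borel_measurable Q"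
    using assms(3-6) by measurable
  have bounded: "\<bar>f1 x\<bar> \<le> N" "\<bar>f2 x\<bar> \<le> N" if "x \<in> space Q" for x
    using that assms(2,7,8) by auto
  show "KL_avg Q (Pcond eta1 (\<lambda>x. exp (f1 x))) (Pcond eta2 (\<lambda>x. exp (f2 x)))
          \<le> ennreal (1 + exp (2 * N)) *
            (L2Q_sq Q (\<lambda>x. eta1 x - eta2 x) + L2Q_sq Q (\<lambda>x. f1 x - f2 x))"
    unfolding KL_avg_def L2Q_sq_def Pcond_eq_gauss_dens
    by (rule nn_integral_le_cmult_sum_squares[OF _ eta f])
       (simp_all add: add_nonneg_nonneg KL_x_gauss_dens_exp_le bounded)
  show "Var_avg Q (Pcond eta1 (\<lambda>x. exp (f1 x))) (Pcond eta2 (\<lambda>x. exp (f2 x)))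
          \<le> ennreal (exp (4 * N)) *
            (L2Q_sq Q (\<lambda>x. eta1 x - eta2 x) + L2Q_sq Q (\<lambda>x. f1 x - f2 x))"
    unfolding Var_avg_def L2Q_sq_def Pcond_eq_gauss_dens
    by (rule nn_integral_le_cmult_sum_squares[OF _ eta f])
       (simp_all add: Var_x_gauss_dens_exp_le bounded)
qed

end
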